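(* Let $1\le r\le s\le t$ and let $u=ABCd$, $v=A'B'C'd'$ be vertices of $E3C(r,s,t)$ with $A\ne A'$, $B\ne B'$, $C=C'$ and $d=d'$. Then there exist $2r+2$ pairwise internally disjoint $u$–$v$ paths in $E3C(r,s,t)$, each of length at most $r+s+5$ if $d=0$, and each of length at most $r+s+7$ if $d\in\{1,2\}$.
   Context: The exchanged 3-ary $n$-cube $E3C(r,s,t)$ ($r,s,t\ge1$, $n=r+s+t+1$): vertices are strings written $x=ABCd$ with $A\in\{0,1,2\}^r$, $B\in\{0,1,2\}^s$, $C\in\{0,1,2\}^t$, $d\in\{0,1,2\}$. Two distinct vertices $x=ABCd$, $y=A'B'C'd'$ are adjacent iff one of: (E0) $A=A',B=B',C=C'$ and $d\ne d'$; (E1) $d=d'=0$, $A=A'$, $B=B'$ and $C,C'$ differ in exactly one position; (E2) $d=d'=1$, $A=A'$, $C=C'$ and $B,B'$ differ in exactly one position; (E3) $d=d'=2$, $B=B'$, $C=C'$ and $A,A'$ differ in exactly one position. Paths are internally disjoint if they share no vertices other than their endpoints; length = number of edges. *)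

theory Defs
  imports Main
begin

text \<open>A vertex ABCd of E3C(r,s,t) is a quadruple (A,B,C,d) with A,B,C words over {0,1,2}
  (lists of naturals < 3) of lengths r,s,t and d \<in> {0,1,2}.\<close>

type_synonym vtx = "nat list \<times> nat list \<times> nat list \<times> nat"

definition word3 :: "nat \<Rightarrow> nat list \<Rightarrow> bool" where
  "word3 n X \<longleftrightarrow> length X = n \<and> (\<forall>a\<in>set X. a < 3)"

definition e3c_vert :: "nat \<Rightarrow> nat \<Rightarrow> nat \<Rightarrow> vtx \<Rightarrow> bool" where
  "e3c_vert r s t x = (case x of (A, B, C, d) \<Rightarrow>
     word3 r A \<and> word3 s B \<and> word3 t C \<and> d < 3)"

definition differ1 :: "nat list \<Rightarrow> nat list \<Rightarrow> bool" where
  "differ1 X Y \<longleftrightarrow> length X = length Y \<and> card {i. i < length X \<and> X ! i \<noteq> Y ! i} = 1"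

definition e3c_adj :: "nat \<Rightarrow> nat \<Rightarrow> nat \<Rightarrow> vtx \<Rightarrow> vtx \<Rightarrow> bool" where
  "e3c_adj r s t x y = (case x of (A, B, C, d) \<Rightarrow> case y of (A', B', C', d') \<Rightarrow>
     e3c_vert r s t x \<and> e3c_vert r s t y \<and> x \<noteq> y \<and>
     ((A = A' \<and> B = B' \<and> C = C' \<and> d \<noteq> d') \<or>
      (d = 0 \<and> d' = 0 \<and> A = A' \<and> B = B' \<and> differ1 C C') \<or>
      (d = 1 \<and> d' = 1 \<and> A = A' \<and> C = C' \<and> differ1 B B') \<or>
      (d = 2 \<and> d' = 2 \<and> B = B' \<and> C = C' \<and> differ1 A A')))"

text \<open>A u-v path is a nonempty list of distinct vertices starting at u, ending at v,
  with consecutive entries adjacent. Its length is the number of edges, length p - 1.\<close>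
definition e3c_path :: "nat \<Rightarrow> nat \<Rightarrow> nat \<Rightarrow> vtx \<Rightarrow> vtx \<Rightarrow> vtx list \<Rightarrow> bool" where
  "e3c_path r s t u v p \<longleftrightarrow> p \<noteq> [] \<and> hd p = u \<and> last p = v \<and> distinct p \<and>
     (\<forall>x\<in>set p. e3c_vert r s t x) \<and>
     (\<forall>i. Suc i < length p \<longrightarrow> e3c_adj r s t (p ! i) (p ! Suc i))"

definition internally_disjoint :: "vtx \<Rightarrow> vtx \<Rightarrow> vtx list list \<Rightarrow> bool" where
  "internally_disjoint u v ps \<longleftrightarrow> distinct ps \<and>
     (\<forall>i j. i < length ps \<longrightarrow> j < length ps \<longrightarrow> i \<noteq> j \<longrightarrow>
        set (ps ! i) \<inter> set (ps ! j) \<subseteq> {u, v})"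

end

theory Submission
  imports Defs
begin

text \<open>For d = 0, each of the 2r words c obtained from C by changing
  one of its first r letters gives a path that steps into the layer c, changes B in level 1 and then
  A in level 2 there, and steps back; two more paths do the same inside the layer C, one changing B
  first and one changing A first.

  For d = 2, let S and T consist of A and A' together with their 2r neighbours in the first r
  letters, and match S with T by a bijection \<pi> fixing S \<inter> T. The path for s \<in> S changes A to s,
  then changes B in level 1, directly to B' if s \<in> T, and otherwise first to an intermediate word
  \<mu> s, where A moves from s to \<pi> s in level 2; finally A changes to A'. Choosing the \<mu> s pairwise
  distinct and close to B and B' (or, if B has a single letter, exploiting that these paths never
  change the first letter of A) makes the 2r + 1 paths disjoint and short; the last path detours
  through level 0 and a neighbouring layer. Exchanging A with B and level 1 with level 2 reduces the
  case d = 1 to d = 2.\<close>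

subsection \<open>Hamming distance\<close>

definition hamming :: "'a list \<Rightarrow> 'a list \<Rightarrow> nat" where
  "hamming X Y = card {i. i < length X \<and> X ! i \<noteq> Y ! i}"

lemma hamming_Cons: "hamming (x # xs) (y # ys) = (if x = y then 0 else 1) + hamming xs ys"
proof -
  let ?D = "{i. i < length xs \<and> xs ! i \<noteq> ys ! i}"
  have "{i. i < length (x # xs) \<and> (x # xs) ! i \<noteq> (y # ys) ! i} =
      (if x = y then {} else {0}) \<union> Suc ` ?D" (is "?L = ?R")
  proof (rule set_eqI)
    fix i
    show "i \<in> ?L \<longleftrightarrow> i \<in> ?R" by (cases i) auto
  qed
  moreover have "card ?R = card (if x = y then {} else {0::nat}) + card (Suc ` ?D)"
    by (rule card_Un_disjoint) auto
  ultimately show ?thesis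
    by (simp add: hamming_def card_image)
qed

lemma hamming_Nil [simp]: "hamming [] ys = 0"
  by (simp add: hamming_def)

lemma hamming_self [simp]: "hamming X X = 0"
  by (simp add: hamming_def)

lemma hamming_le_length: "hamming X Y \<le> length X"
  unfolding hamming_def by (rule card_mono[where B = "{..<length X}", simplified]) auto

lemma hamming_le_card:
  "finite D \<Longrightarrow> {i. i < length X \<and> X ! i \<noteq> Y ! i} \<subseteq> D \<Longrightarrow> hamming X Y \<le> card D"
  unfolding hamming_def by (rule card_mono)

lemma hamming_commute: "length X = length Y \<Longrightarrow> hamming X Y = hamming Y X"
  unfolding hamming_def by metis

lemma differ1_iff_hamming: "differ1 X Y \<longleftrightarrow> length X = length Y \<and> hamming X Y = 1"
  by (simp add: differ1_def hamming_def)

lemma differ1_sym: "differ1 X Y \<Longrightarrow> differ1 Y X"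
  by (metis differ1_iff_hamming hamming_commute)

lemma differ1_imp_neq: "differ1 X Y \<Longrightarrow> X \<noteq> Y"
  by (auto simp: differ1_iff_hamming)

lemma differ1_list_update: "i < length X \<Longrightarrow> a \<noteq> X ! i \<Longrightarrow> differ1 X (X[i := a])"
proof -
  assume "i < length X" "a \<noteq> X ! i"
  then have "{j. j < length X \<and> X ! j \<noteq> X[i := a] ! j} = {i}"
    by (auto simp: nth_list_update)
  then show ?thesis by (simp add: differ1_def)
qed

lemma list_update_eq_or_differ1: "i < length X \<Longrightarrow> X[i := a] = X \<or> differ1 X (X[i := a])"
  by (cases "a = X ! i") (auto intro: differ1_list_update)

lemma hamming_le_one: "Y = X \<or> differ1 X Y \<Longrightarrow> hamming X Y \<le> 1"
  by (auto simp: differ1_iff_hamming)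

lemma word3_list_update: "word3 n X \<Longrightarrow> a < 3 \<Longrightarrow> word3 n (X[i := a])"
  using set_update_subset_insert[of X i a] by (auto simp: word3_def)

lemma finite_word3: "finite {X. word3 n X}"
proof (rule finite_subset)
  show "{X. word3 n X} \<subseteq> {xs. set xs \<subseteq> {..<3} \<and> length xs = n}"
    by (auto simp: word3_def)
qed (rule finite_lists_length_eq, simp)

lemma Suc_mod_3_neq: "(a::nat) < 3 \<Longrightarrow> Suc a mod 3 \<noteq> a"
  by presburger

lemma exists_differ1_word3:
  assumes "word3 k Z" "1 \<le> k"
  obtains Z' where "word3 k Z'" "differ1 Z Z'"
proof
  have "length Z = k" "Z ! 0 < 3" using assms by (auto simp: word3_def)
  then show "differ1 Z (Z[0 := Suc (Z ! 0) mod 3])"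
    using assms(2) Suc_mod_3_neq by (intro differ1_list_update) auto
qed (use assms in \<open>simp add: word3_list_update\<close>)

lemma exists_third_letter_word:
  assumes "word3 1 Y" "word3 1 Y'" "Y \<noteq> Y'"
  obtains W where "word3 1 W" "W \<noteq> Y" "W \<noteq> Y'"
proof -
  obtain a a' where a: "Y = [a]" "Y' = [a']" "a < 3" "a' < 3"
    using assms by (auto simp: word3_def length_Suc_conv)
  then have "a \<noteq> a'" using assms(3) by simp
  then have "3 - a - a' \<noteq> a" "3 - a - a' \<noteq> a'" "3 - a - a' < 3"
    using a(3,4) by presburger+
  then show thesis
    using a by (intro that[of "[3 - a - a']"]) (simp_all add: word3_def)
qed

lemma card_other_letters: "(c::nat) < 3 \<Longrightarrow> card {a. a < 3 \<and> a \<noteq> c} = 2"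
proof -
  assume "c < 3"
  moreover have "{a::nat. a < 3 \<and> a \<noteq> c} = {..<3} - {c}" by auto
  ultimately show ?thesis by simp
qed

subsection \<open>Walking from one word to another\<close>

fun word_walk :: "'a list \<Rightarrow> 'a list \<Rightarrow> 'a list list" where
  "word_walk [] _ = [[]]"
| "word_walk (x # xs) [] = [x # xs]"
| "word_walk (x # xs) (y # ys) = (if x = y then map ((#) x) (word_walk xs ys)
     else (x # xs) # map ((#) y) (word_walk xs ys))"

lemma word_walk_not_Nil [simp]: "word_walk xs ys \<noteq> []"
  by (induction xs ys rule: word_walk.induct) auto

lemma hd_word_walk [simp]: "hd (word_walk xs ys) = xs"
  by (induction xs ys rule: word_walk.induct) (auto simp: hd_map)

lemma last_word_walk: "length xs = length ys \<Longrightarrow> last (word_walk xs ys) = ys"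
  by (induction xs ys rule: word_walk.induct) (auto simp: last_map)

lemma length_word_walk: "length xs = length ys \<Longrightarrow> length (word_walk xs ys) = hamming xs ys + 1"
  by (induction xs ys rule: word_walk.induct) (auto simp: hamming_Cons)

lemma distinct_word_walk: "distinct (word_walk xs ys)"
  by (induction xs ys rule: word_walk.induct) (auto simp: distinct_map)

lemma word_walk_letters:
  "length xs = length ys \<Longrightarrow> z \<in> set (word_walk xs ys) \<Longrightarrow>
     length z = length xs \<and> (\<forall>i < length xs. z ! i = xs ! i \<or> z ! i = ys ! i)"
proof (induction xs ys arbitrary: z rule: word_walk.induct)
  case (3 x xs y ys)
  then have l: "length xs = length ys" by simp
  show ?case
  proof (cases "x = y")
    case True
    with "3.prems"(2) obtain w where "w \<in> set (word_walk xs ys)" "z = x # w" by auto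
    with "3.IH"(1)[OF True l] True show ?thesis by (auto simp: nth_Cons split: nat.splits)
  next
    case False
    with "3.prems"(2) consider "z = x # xs" | w where "w \<in> set (word_walk xs ys)" "z = y # w" by auto
    then show ?thesis
    proof cases
      case 2
      with "3.IH"(2)[OF False l] show ?thesis by (auto simp: nth_Cons split: nat.splits)
    qed (use l in simp)
  qed
qed auto

lemma nth_word_walk:
  "length xs = length ys \<Longrightarrow> z \<in> set (word_walk xs ys) \<Longrightarrow> i < length xs \<Longrightarrow> xs ! i = ys ! i \<Longrightarrow>
    z ! i = xs ! i"
  using word_walk_letters by metis

lemma word3_word_walk: "word3 n xs \<Longrightarrow> word3 n ys \<Longrightarrow> z \<in> set (word_walk xs ys) \<Longrightarrow> word3 n z"
proof -
  assume a: "word3 n xs" "word3 n ys" "z \<in> set (word_walk xs ys)"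
  then have "length xs = length ys" by (simp add: word3_def)
  from word_walk_letters[OF this a(3)] a show ?thesis
    unfolding word3_def by (metis in_set_conv_nth)
qed

lemma successively_differ1_word_walk:
  "length xs = length ys \<Longrightarrow> successively differ1 (word_walk xs ys)"
proof (induction xs ys rule: word_walk.induct)
  case (3 x xs y ys)
  then have "successively differ1 (map ((#) c) (word_walk xs ys))" for c
    by (cases "x = y") (auto simp: successively_map differ1_iff_hamming hamming_Cons)
  moreover have "x \<noteq> y \<Longrightarrow> differ1 (x # xs) (y # xs)"
    by (simp add: differ1_iff_hamming hamming_Cons)
  ultimately show ?case by (auto simp: successively_Cons hd_map)
qed auto

lemma set_word_walk_short:
  assumes "Y = X \<or> differ1 X Y"
  shows "set (word_walk X Y) = {X, Y}"
proof -
  have l: "length X = length Y" and "hamming X Y \<le> 1"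
    using assms hamming_le_one by (auto simp: differ1_iff_hamming)
  then have "length (word_walk X Y) \<le> 2" by (simp add: length_word_walk)
  moreover obtain a w where w: "word_walk X Y = a # w"
    by (cases "word_walk X Y") auto
  ultimately have "w = [] \<or> (\<exists>b. w = [b])"
    by (cases w) auto
  then show ?thesis
    using hd_word_walk[of X Y] last_word_walk[OF l] w by auto
qed

subsection \<open>Neighbours in a prefix\<close>

definition prefix_neighbours :: "nat \<Rightarrow> nat list \<Rightarrow> nat list set" where
  "prefix_neighbours r X = {X[i := a] | i a. i < r \<and> a < 3 \<and> a \<noteq> X ! i}"

lemma prefix_neighbours_eq_image:
  "prefix_neighbours r X = (\<lambda>(i, a). X[i := a]) ` (SIGMA i:{..<r}. {a. a < 3 \<and> a \<noteq> X ! i})"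
  unfolding prefix_neighbours_def by auto

lemma finite_prefix_neighbours: "finite (prefix_neighbours r X)"
  unfolding prefix_neighbours_eq_image by simp

lemma prefix_neighboursD:
  assumes "M \<in> prefix_neighbours r X" "word3 n X" "r \<le> n"
  shows "word3 n M" "differ1 X M"
proof -
  obtain i a where h: "M = X[i := a]" "i < r" "a < 3" "a \<noteq> X ! i"
    using assms(1) unfolding prefix_neighbours_def by auto
  then show "word3 n M" using assms(2) word3_list_update by simp
  show "differ1 X M" using h assms differ1_list_update[of i X a] by (simp add: word3_def)
qed

lemma card_prefix_neighbours:
  assumes "word3 n X" "r \<le> n"
  shows "card (prefix_neighbours r X) = 2 * r"
proof -
  let ?I = "SIGMA i:{..<r}. {a. a < 3 \<and> a \<noteq> X ! i}"
  have inj: "inj_on (\<lambda>(i, a). X[i := a]) ?I"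
  proof (rule inj_onI, clarsimp)
    fix i a j b assume h: "X[i := a] = X[j := b]" "i < r" "a \<noteq> X ! i" "j < r"
    have "i < length X" "j < length X" using h assms by (auto simp: word3_def)
    moreover have "X[i := a] ! i = X[j := b] ! i" using h(1) by simp
    ultimately show "i = j \<and> a = b"
      using h(3) by (cases "i = j") auto
  qed
  have "card ?I = (\<Sum>i<r. card {a. a < 3 \<and> a \<noteq> X ! i})" by (simp add: card_SigmaI)
  also have "\<dots> = (\<Sum>i<r. 2)"
    using assms by (intro sum.cong refl card_other_letters) (auto simp: word3_def)
  finally show ?thesis
    unfolding prefix_neighbours_eq_image using card_image[OF inj] by simp
qed

lemma card_insert_prefix_neighbours:
  assumes "word3 n X" "r \<le> n"
  shows "card (insert X (prefix_neighbours r X)) = 2 * r + 1"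
proof -
  have "X \<notin> prefix_neighbours r X"
    using prefix_neighboursD(2)[OF _ assms] differ1_imp_neq by blast
  then show ?thesis
    using card_prefix_neighbours[OF assms] finite_prefix_neighbours by simp
qed

subsection \<open>Paths and path systems\<close>

lemma e3c_path_iff:
  "e3c_path r s t u v p \<longleftrightarrow> p \<noteq> [] \<and> hd p = u \<and> last p = v \<and> distinct p \<and>
     (\<forall>x\<in>set p. e3c_vert r s t x) \<and> successively (e3c_adj r s t) p"
  by (simp add: e3c_path_def successively_conv_nth)

lemma e3c_adj_imp_vert: "e3c_adj r s t x y \<Longrightarrow> e3c_vert r s t x \<and> e3c_vert r s t y"
  by (cases x, cases y) (simp add: e3c_adj_def)

lemma successively_e3c_adj_imp_vert:
  "successively (e3c_adj r s t) p \<Longrightarrow> 2 \<le> length p \<Longrightarrow> x \<in> set p \<Longrightarrow> e3c_vert r s t x"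
proof (induction p rule: induct_list012)
  case (3 a b p)
  then show ?case
    by (cases p) (auto dest: e3c_adj_imp_vert)
qed auto

lemma e3c_pathI:
  assumes "distinct p" "successively (e3c_adj r s t) p" "hd p = u" "last p = v" "2 \<le> length p"
  shows "e3c_path r s t u v p"
  using assms successively_e3c_adj_imp_vert[OF assms(2,5)] by (auto simp: e3c_path_iff)

lemma e3c_path_extend:
  assumes "e3c_path r s t u v p" "e3c_adj r s t u' u" "e3c_adj r s t v v'"
    and "u' \<notin> set p" "v' \<notin> set p" "u' \<noteq> v'"
  shows "e3c_path r s t u' v' (u' # p @ [v'])"
  using assms by (intro e3c_pathI) (auto simp: e3c_path_iff successively_append_iff successively_Cons)

lemma e3c_path_has_inner_vertex:
  assumes "e3c_path r s t u v p" "3 \<le> length p"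
  shows "\<not> set p \<subseteq> {u, v}"
proof
  assume "set p \<subseteq> {u, v}"
  then have "card (set p) \<le> card {u, v}"
    by (rule card_mono[rotated]) simp
  also have "\<dots> \<le> 2"
    by (simp add: card_insert_if)
  finally have "card (set p) \<le> 2" .
  moreover have "card (set p) = length p"
    using assms(1) by (simp add: e3c_path_def distinct_card)
  ultimately show False using assms(2) by simp
qed

definition disjoint_paths :: "nat \<Rightarrow> nat \<Rightarrow> nat \<Rightarrow> vtx \<Rightarrow> vtx \<Rightarrow> nat \<Rightarrow> nat \<Rightarrow> bool" where
  "disjoint_paths r s t u v N L \<longleftrightarrow> (\<exists>ps. length ps = N \<and> internally_disjoint u v ps \<and>
     (\<forall>p\<in>set ps. e3c_path r s t u v p \<and> length p - 1 \<le> L))"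

lemma disjoint_pathsI:
  assumes "finite I"
    and paths: "\<And>i. i \<in> I \<Longrightarrow> e3c_path r s t u v (P i) \<and> 3 \<le> length (P i) \<and> length (P i) - 1 \<le> L"
    and disjoint: "\<And>i j. i \<in> I \<Longrightarrow> j \<in> I \<Longrightarrow> i \<noteq> j \<Longrightarrow> set (P i) \<inter> set (P j) \<subseteq> {u, v}"
  shows "disjoint_paths r s t u v (card I) L"
proof -
  obtain xs where xs: "set xs = I" "distinct xs"
    using finite_distinct_list[OF \<open>finite I\<close>] by blast
  have "inj_on P I"
  proof (rule inj_onI, rule ccontr)
    fix i j assume "i \<in> I" "j \<in> I" "P i = P j" "i \<noteq> j"
    then show False
      using disjoint[of i j] paths[of j] e3c_path_has_inner_vertex[of r s t u v "P j"] by auto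
  qed
  then have "distinct (map P xs)"
    using xs by (simp add: distinct_map)
  moreover have "set (map P xs ! a) \<inter> set (map P xs ! b) \<subseteq> {u, v}"
    if "a < length xs" "b < length xs" "a \<noteq> b" for a b
  proof -
    have "xs ! a \<noteq> xs ! b" using that xs(2) nth_eq_iff_index_eq by blast
    then show ?thesis using that xs(1) disjoint[of "xs ! a" "xs ! b"] nth_mem[of a xs] nth_mem[of b xs] by simp
  qed
  ultimately have "internally_disjoint u v (map P xs)"
    by (simp add: internally_disjoint_def)
  moreover have "length (map P xs) = card I"
    using xs distinct_card by fastforce
  ultimately show ?thesis
    unfolding disjoint_paths_def using xs paths by (intro exI[of _ "map P xs"]) auto
qed

definition e3c_swap :: "vtx \<Rightarrow> vtx" where
  "e3c_swap = (\<lambda>(A, B, C, d). (B, A, C, if d = 1 then 2 else if d = 2 then 1 else d))"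

lemma inj_e3c_swap: "inj e3c_swap"
  by (auto simp: inj_def e3c_swap_def split: if_splits)

lemma e3c_adj_swap: "e3c_adj s r t x y \<Longrightarrow> e3c_adj r s t (e3c_swap x) (e3c_swap y)"
  by (cases x, cases y) (auto simp: e3c_adj_def e3c_vert_def e3c_swap_def)

lemma e3c_vert_swap: "e3c_vert s r t x \<Longrightarrow> e3c_vert r s t (e3c_swap x)"
  by (cases x) (auto simp: e3c_vert_def e3c_swap_def)

lemma e3c_path_swap:
  "e3c_path s r t u v p \<Longrightarrow> e3c_path r s t (e3c_swap u) (e3c_swap v) (map e3c_swap p)"
  using e3c_adj_swap e3c_vert_swap inj_e3c_swap
  by (auto simp: e3c_path_iff successively_map hd_map last_map distinct_map inj_on_def
      elim!: successively_mono)

lemma disjoint_paths_swap: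
  assumes "disjoint_paths s r t u v N L"
  shows "disjoint_paths r s t (e3c_swap u) (e3c_swap v) N L"
proof -
  obtain ps where ps: "length ps = N" "internally_disjoint u v ps"
    "\<forall>p\<in>set ps. e3c_path s r t u v p \<and> length p - 1 \<le> L"
    using assms by (auto simp: disjoint_paths_def)
  let ?qs = "map (map e3c_swap) ps"
  have "set (?qs ! i) \<inter> set (?qs ! j) \<subseteq> {e3c_swap u, e3c_swap v}"
    if "i < length ps" "j < length ps" "i \<noteq> j" for i j
  proof -
    have "set (?qs ! i) \<inter> set (?qs ! j) = e3c_swap ` (set (ps ! i) \<inter> set (ps ! j))"
      using that inj_e3c_swap by (simp add: image_Int)
    also have "\<dots> \<subseteq> e3c_swap ` {u, v}"
      using ps(2) that by (intro image_mono) (simp add: internally_disjoint_def)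
    finally show ?thesis by simp
  qed
  moreover have "distinct ?qs"
    using ps(2) inj_e3c_swap
    by (simp add: internally_disjoint_def distinct_map inj_on_def inj_map_eq_map)
  ultimately have "internally_disjoint (e3c_swap u) (e3c_swap v) ?qs"
    by (simp add: internally_disjoint_def)
  then show ?thesis
    unfolding disjoint_paths_def using ps e3c_path_swap[of s r t u v] by (intro exI[of _ ?qs]) auto
qed

abbreviation walk1 :: "nat list \<Rightarrow> nat list \<Rightarrow> nat list \<Rightarrow> nat list \<Rightarrow> vtx list" where
  "walk1 A C B B' \<equiv> map (\<lambda>y. (A, y, C, 1)) (word_walk B B')"

abbreviation walk2 :: "nat list \<Rightarrow> nat list \<Rightarrow> nat list \<Rightarrow> nat list \<Rightarrow> vtx list" where
  "walk2 B C A A' \<equiv> map (\<lambda>x. (x, B, C, 2)) (word_walk A A')"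

lemma successively_walk1:
  assumes "word3 m A" "word3 n B" "word3 n B'" "word3 k C"
  shows "successively (e3c_adj m n k) (walk1 A C B B')"
proof -
  have l: "length B = length B'" using assms by (simp add: word3_def)
  have "e3c_adj m n k (A, x, C, 1) (A, y, C, 1)"
    if "x \<in> set (word_walk B B')" "y \<in> set (word_walk B B')" "differ1 x y" for x y
  proof -
    have "word3 n x" "word3 n y" using that word3_word_walk[OF assms(2,3)] by auto
    then show ?thesis using that(3) differ1_imp_neq[OF that(3)] assms
      by (simp add: e3c_adj_def e3c_vert_def)
  qed
  then show ?thesis
    using successively_mono[OF successively_differ1_word_walk[OF l]] by (simp add: successively_map)
qed

lemma successively_walk2:
  assumes "word3 m A" "word3 m A'" "word3 n B" "word3 k C"
  shows "successively (e3c_adj m n k) (walk2 B C A A')"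
proof -
  have l: "length A = length A'" using assms by (simp add: word3_def)
  have "e3c_adj m n k (x, B, C, 2) (y, B, C, 2)"
    if "x \<in> set (word_walk A A')" "y \<in> set (word_walk A A')" "differ1 x y" for x y
  proof -
    have "word3 m x" "word3 m y" using that word3_word_walk[OF assms(1,2)] by auto
    then show ?thesis using that(3) differ1_imp_neq[OF that(3)] assms
      by (simp add: e3c_adj_def e3c_vert_def)
  qed
  then show ?thesis
    using successively_mono[OF successively_differ1_word_walk[OF l]] by (simp add: successively_map)
qed

subsection \<open>Paths between two vertices of level 0\<close>

definition path_B_first :: "nat list \<Rightarrow> nat list \<Rightarrow> nat list \<Rightarrow> nat list \<Rightarrow> nat list \<Rightarrow> vtx list" where
  "path_B_first A B C A' B' = (A, B, C, 0) # walk1 A C B B' @ walk2 B' C A A' @ [(A', B', C, 0)]"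

definition path_A_first :: "nat list \<Rightarrow> nat list \<Rightarrow> nat list \<Rightarrow> nat list \<Rightarrow> nat list \<Rightarrow> vtx list" where
  "path_A_first A B C A' B' = (A, B, C, 0) # walk2 B C A A' @ walk1 A' C B B' @ [(A', B', C, 0)]"

lemma path_B_first:
  assumes "word3 m A" "word3 m A'" "word3 n B" "word3 n B'" "word3 k C" "(A, B) \<noteq> (A', B')"
  shows "e3c_path m n k (A, B, C, 0) (A', B', C, 0) (path_B_first A B C A' B')"
    and "length (path_B_first A B C A' B') = hamming A A' + hamming B B' + 4"
proof -
  have l: "length A = length A'" "length B = length B'"
    using assms by (auto simp: word3_def)
  show "e3c_path m n k (A, B, C, 0) (A', B', C, 0) (path_B_first A B C A' B')"
  proof (rule e3c_pathI)
    show "distinct (path_B_first A B C A' B')"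
      using assms(6) by (auto simp: path_B_first_def distinct_map distinct_word_walk inj_on_def)
    show "successively (e3c_adj m n k) (path_B_first A B C A' B')"
      using successively_walk1[OF assms(1,3,4,5)] successively_walk2[OF assms(1,2,4,5)] assms
      by (simp add: path_B_first_def successively_append_iff successively_Cons hd_map last_map
          last_word_walk l) (simp add: e3c_adj_def e3c_vert_def)
  qed (simp_all add: path_B_first_def)
  show "length (path_B_first A B C A' B') = hamming A A' + hamming B B' + 4"
    using l by (simp add: path_B_first_def length_word_walk)
qed

lemma path_A_first_eq_swap:
  "path_A_first A B C A' B' = map e3c_swap (path_B_first B A C B' A')"
  by (simp add: path_A_first_def path_B_first_def e3c_swap_def)

lemma path_A_first:
  assumes "word3 m A" "word3 m A'" "word3 n B" "word3 n B'" "word3 k C" "(A, B) \<noteq> (A', B')"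
  shows "e3c_path m n k (A, B, C, 0) (A', B', C, 0) (path_A_first A B C A' B')"
    and "length (path_A_first A B C A' B') = hamming A A' + hamming B B' + 4"
  using path_B_first[of n B B' m A A' k C] e3c_path_swap[of n m k "(B, A, C, 0)" "(B', A', C, 0)"] assms
  by (auto simp: path_A_first_eq_swap e3c_swap_def)

definition path_via_layer :: "nat list \<Rightarrow> nat list \<Rightarrow> nat list \<Rightarrow> nat list \<Rightarrow> nat list \<Rightarrow> nat list \<Rightarrow> vtx list" where
  "path_via_layer A B C A' B' C' = (A, B, C, 0) # path_B_first A B C' A' B' @ [(A', B', C, 0)]"

lemma path_via_layer:
  assumes words: "word3 m A" "word3 m A'" "word3 n B" "word3 n B'" "word3 k C" "word3 k C'"
    and "A \<noteq> A'" "differ1 C C'"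
  shows "e3c_path m n k (A, B, C, 0) (A', B', C, 0) (path_via_layer A B C A' B' C')"
    and "length (path_via_layer A B C A' B' C') = hamming A A' + hamming B B' + 6"
proof -
  note p = path_B_first[OF words(1-4,6)]
  have "C \<noteq> C'" using \<open>differ1 C C'\<close> by (simp add: differ1_imp_neq)
  then show "e3c_path m n k (A, B, C, 0) (A', B', C, 0) (path_via_layer A B C A' B' C')"
    unfolding path_via_layer_def using \<open>A \<noteq> A'\<close> words \<open>differ1 C C'\<close> differ1_sym[OF \<open>differ1 C C'\<close>]
    by (intro e3c_path_extend[OF p(1)]) (auto simp: path_B_first_def e3c_adj_def e3c_vert_def)
  show "length (path_via_layer A B C A' B' C') = hamming A A' + hamming B B' + 6"
    using p(2) \<open>A \<noteq> A'\<close> by (simp add: path_via_layer_def)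
qed

lemma level0_disjoint_paths:
  assumes words: "word3 m A" "word3 m A'" "word3 n B" "word3 n B'" "word3 k C"
    and "A \<noteq> A'" "B \<noteq> B'" "r \<le> k"
  shows "disjoint_paths m n k (A, B, C, 0) (A', B', C, 0) (2 * r + 2) (m + n + 5)"
proof -
  let ?u = "(A, B, C, 0::nat)" and ?v = "(A', B', C, 0::nat)"
  let ?N = "prefix_neighbours r C"
  define P where "P = case_sum (path_via_layer A B C A' B')
    (\<lambda>b. if b then path_B_first A B C A' B' else path_A_first A B C A' B')"
  have bound: "hamming A A' + hamming B B' \<le> m + n"
    using words hamming_le_length[of A A'] hamming_le_length[of B B'] by (simp add: word3_def)
  define I where "I = Inl ` ?N \<union> range (Inr :: bool \<Rightarrow> nat list + bool)"
  have "card I = 2 * r + 2" unfolding I_def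
    using card_prefix_neighbours[OF words(5) \<open>r \<le> k\<close>] finite_prefix_neighbours
    by (subst card_Un_disjoint) (auto simp: card_image card_UNIV_bool)
  moreover have "disjoint_paths m n k ?u ?v (card I) (m + n + 5)"
  proof (rule disjoint_pathsI)
    fix i assume "i \<in> I"
    then consider c where "i = Inl c" "c \<in> ?N" | "i = Inr True" | "i = Inr False"
      unfolding I_def by (metis (full_types) UnE imageE rangeE)
    then show "e3c_path m n k ?u ?v (P i) \<and> 3 \<le> length (P i) \<and> length (P i) - 1 \<le> m + n + 5"
    proof cases
      case 1
      then have "word3 k c" "differ1 C c"
        using prefix_neighboursD[OF _ words(5) \<open>r \<le> k\<close>] by auto
      with 1 show ?thesis
        using path_via_layer[OF words] \<open>A \<noteq> A'\<close> bound by (simp add: P_def)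
    qed (use path_B_first[OF words] path_A_first[OF words] bound \<open>A \<noteq> A'\<close> in \<open>simp_all add: P_def\<close>)
  next
    define Q :: "nat list + bool \<Rightarrow> vtx set" where "Q = case_sum (\<lambda>c. {(x, y, c, d) | x y d. True})
      (\<lambda>b. if b then range (\<lambda>y. (A, y, C, 1)) \<union> range (\<lambda>x. (x, B', C, 2))
        else range (\<lambda>y. (A', y, C, 1)) \<union> range (\<lambda>x. (x, B, C, 2)))"
    have inner: "set (P i) \<subseteq> {?u, ?v} \<union> Q i" for i
      by (cases i) (auto simp: P_def Q_def path_via_layer_def path_B_first_def path_A_first_def)
    fix i j assume "i \<in> I" "j \<in> I" "i \<noteq> j"
    moreover have "C \<notin> ?N"
      using prefix_neighboursD(2)[OF _ words(5) \<open>r \<le> k\<close>] differ1_imp_neq by blast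
    ultimately have "Q i \<inter> Q j = {}"
      using \<open>A \<noteq> A'\<close> \<open>B \<noteq> B'\<close> by (auto simp: Q_def I_def split: if_splits)
    then show "set (P i) \<inter> set (P j) \<subseteq> {?u, ?v}"
      using inner[of i] inner[of j] by blast
  qed (simp add: I_def finite_prefix_neighbours)
  ultimately show ?thesis by simp
qed

subsection \<open>Paths between two vertices of level 2\<close>

definition path_through ::
  "nat list \<Rightarrow> nat list \<Rightarrow> nat list \<Rightarrow> nat list \<Rightarrow> nat list \<Rightarrow> nat list \<Rightarrow> vtx list" where
  "path_through X Y Z X' Y' s = walk2 Y Z X s @ walk1 s Z Y Y' @ walk2 Y' Z s X'"

definition path_around ::
  "nat list \<Rightarrow> nat list \<Rightarrow> nat list \<Rightarrow> nat list \<Rightarrow> nat list \<Rightarrow> nat list \<Rightarrow> nat list \<Rightarrow> nat list \<Rightarrow> vtx list"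
  where
  "path_around X Y Z X' Y' s M t =
     walk2 Y Z X s @ walk1 s Z Y M @ walk2 M Z s t @ walk1 t Z M Y' @ walk2 Y' Z t X'"

lemma path_through:
  assumes words: "word3 m X" "word3 m X'" "word3 m s" "word3 n Y" "word3 n Y'" "word3 k Z"
    and "Y \<noteq> Y'"
  shows "e3c_path m n k (X, Y, Z, 2) (X', Y', Z, 2) (path_through X Y Z X' Y' s)"
    and "length (path_through X Y Z X' Y' s) = hamming X s + hamming Y Y' + hamming s X' + 3"
proof -
  have l: "length X = length s" "length Y = length Y'" "length s = length X'"
    using words by (auto simp: word3_def)
  show "e3c_path m n k (X, Y, Z, 2) (X', Y', Z, 2) (path_through X Y Z X' Y' s)"
  proof (rule e3c_pathI)
    show "distinct (path_through X Y Z X' Y' s)"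
      using \<open>Y \<noteq> Y'\<close> by (auto simp: path_through_def distinct_map distinct_word_walk inj_on_def)
    show "successively (e3c_adj m n k) (path_through X Y Z X' Y' s)"
      using successively_walk2[OF words(1,3,4,6)] successively_walk1[OF words(3-6)]
        successively_walk2[OF words(3,2,5,6)] words
      by (simp add: path_through_def successively_append_iff hd_map last_map last_word_walk l)
        (simp add: e3c_adj_def e3c_vert_def)
  qed (use l \<open>Y \<noteq> Y'\<close> in \<open>simp_all add: path_through_def hd_map last_map last_word_walk
      length_word_walk\<close>)
  show "length (path_through X Y Z X' Y' s) = hamming X s + hamming Y Y' + hamming s X' + 3"
    using l by (simp add: path_through_def length_word_walk)
qed

lemma path_around:
  assumes words: "word3 m X" "word3 m X'" "word3 m s" "word3 m t" "word3 n Y" "word3 n Y'"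
    "word3 n M" "word3 k Z"
    and "Y \<noteq> Y'" "M \<noteq> Y" "M \<noteq> Y'" "s \<noteq> t"
  shows "e3c_path m n k (X, Y, Z, 2) (X', Y', Z, 2) (path_around X Y Z X' Y' s M t)"
    and "length (path_around X Y Z X' Y' s M t) =
      hamming X s + hamming Y M + hamming s t + hamming M Y' + hamming t X' + 5"
proof -
  have l: "length X = length s" "length Y = length M" "length s = length t"
    "length M = length Y'" "length t = length X'"
    using words by (auto simp: word3_def)
  show "e3c_path m n k (X, Y, Z, 2) (X', Y', Z, 2) (path_around X Y Z X' Y' s M t)"
  proof (rule e3c_pathI)
    show "distinct (path_around X Y Z X' Y' s M t)"
      using \<open>Y \<noteq> Y'\<close> \<open>M \<noteq> Y\<close> \<open>M \<noteq> Y'\<close> \<open>s \<noteq> t\<close>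
      by (auto simp: path_around_def distinct_map distinct_word_walk inj_on_def)
    show "successively (e3c_adj m n k) (path_around X Y Z X' Y' s M t)"
      using successively_walk2[OF words(1,3,5,8)] successively_walk1[OF words(3,5,7,8)]
        successively_walk2[OF words(3,4,7,8)] successively_walk1[OF words(4,7,6,8)]
        successively_walk2[OF words(4,2,6,8)] words
      by (simp add: path_around_def successively_append_iff hd_map last_map last_word_walk l)
        (simp add: e3c_adj_def e3c_vert_def)
  qed (use l in \<open>simp_all add: path_around_def hd_map last_map last_word_walk length_word_walk\<close>)
  show "length (path_around X Y Z X' Y' s M t) =
      hamming X s + hamming Y M + hamming s t + hamming M Y' + hamming t X' + 5"
    using l by (simp add: path_around_def length_word_walk)
qed

lemma path_via_layer_from_level2:
  assumes words: "word3 m X" "word3 m X'" "word3 n Y" "word3 n Y'" "word3 k Z" "word3 k Z'"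
    and "X \<noteq> X'" "differ1 Z Z'"
  shows "e3c_path m n k (X, Y, Z, 2) (X', Y', Z, 2)
      ((X, Y, Z, 2) # path_via_layer X Y Z X' Y' Z' @ [(X', Y', Z, 2)])"
    and "length ((X, Y, Z, 2) # path_via_layer X Y Z X' Y' Z' @ [(X', Y', Z, 2)]) =
      hamming X X' + hamming Y Y' + 8"
proof -
  note p = path_via_layer[OF words \<open>X \<noteq> X'\<close> \<open>differ1 Z Z'\<close>]
  have "Z \<noteq> Z'" using \<open>differ1 Z Z'\<close> by (simp add: differ1_imp_neq)
  then show "e3c_path m n k (X, Y, Z, 2) (X', Y', Z, 2)
      ((X, Y, Z, 2) # path_via_layer X Y Z X' Y' Z' @ [(X', Y', Z, 2)])"
    using words \<open>X \<noteq> X'\<close> by (intro e3c_path_extend[OF p(1)])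
      (auto simp: path_via_layer_def path_B_first_def e3c_adj_def e3c_vert_def)
  show "length ((X, Y, Z, 2) # path_via_layer X Y Z X' Y' Z' @ [(X', Y', Z, 2)]) =
      hamming X X' + hamming Y Y' + 8"
    using p(2) by simp
qed

text \<open>Each s \<in> S is routed to its partner \<pi> s \<in> T, changing B directly if s \<in> T, and otherwise
  via the intermediate B-word \<mu> s, at which the A-part moves from s to \<pi> s.\<close>
locale level2_routing =
  fixes m n k :: nat and X X' Y Y' Z :: "nat list"
    and S T :: "nat list set" and \<pi> \<mu> :: "nat list \<Rightarrow> nat list"
  assumes words: "word3 m X" "word3 m X'" "word3 n Y" "word3 n Y'" "word3 k Z"
    and distinct_ends: "X \<noteq> X'" "Y \<noteq> Y'"
    and sources: "\<And>s. s \<in> S \<Longrightarrow> word3 m s \<and> (s = X \<or> differ1 X s)"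
    and targets: "\<And>t. t \<in> T \<Longrightarrow> word3 m t \<and> (X' = t \<or> differ1 t X')"
    and \<pi>_into: "\<pi> ` S \<subseteq> T" and inj_\<pi>: "inj_on \<pi> S"
    and \<pi>_fixes: "\<And>s. s \<in> S \<inter> T \<Longrightarrow> \<pi> s = s"
    and \<mu>: "\<And>s. s \<in> S - T \<Longrightarrow> word3 n (\<mu> s) \<and> \<mu> s \<noteq> Y \<and> \<mu> s \<noteq> Y'"
    and short: "\<And>s. s \<in> S - T \<Longrightarrow>
      hamming X s + hamming Y (\<mu> s) + hamming s (\<pi> s) + hamming (\<mu> s) Y' + hamming (\<pi> s) X' \<le> m + n + 3"
    and separated: "\<And>s s'. s \<in> S - T \<Longrightarrow> s' \<in> S - T \<Longrightarrow> s \<noteq> s' \<Longrightarrow>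
      \<mu> s \<noteq> \<mu> s' \<or> set (word_walk s (\<pi> s)) \<inter> set (word_walk s' (\<pi> s')) = {}"
begin

definition route :: "nat list \<Rightarrow> vtx list" where
  "route s = (if s \<in> T then path_through X Y Z X' Y' s else path_around X Y Z X' Y' s (\<mu> s) (\<pi> s))"

definition zone :: "nat list \<Rightarrow> vtx set" where
  "zone s = {(s, Y, Z, 2), (\<pi> s, Y', Z, 2)} \<union> {(x, y, Z, 1) | x y. x = s \<or> x = \<pi> s} \<union>
     (if s \<in> T then {} else (\<lambda>x. (x, \<mu> s, Z, 2)) ` set (word_walk s (\<pi> s)))"

lemma route_path:
  assumes "s \<in> S"
  shows "e3c_path m n k (X, Y, Z, 2) (X', Y', Z, 2) (route s) \<and> 3 \<le> length (route s) \<and>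
    length (route s) - 1 \<le> m + n + 7"
proof (cases "s \<in> T")
  case True
  have "hamming X s \<le> 1" "hamming s X' \<le> 1" "hamming Y Y' \<le> n"
    using sources[OF assms] targets[OF True] words hamming_le_one hamming_le_length[of Y Y']
    by (auto simp: word3_def)
  then show ?thesis
    using True path_through[OF words(1,2) _ words(3-5) distinct_ends(2), of s] sources[OF assms]
    by (simp add: route_def)
next
  case False
  have "\<pi> s \<in> T" using \<pi>_into assms by auto
  then have "s \<noteq> \<pi> s" using False by auto
  then show ?thesis
    using False path_around[OF words(1,2) _ _ words(3,4) _ words(5) distinct_ends(2), of s "\<pi> s" "\<mu> s"]
      sources[OF assms] targets[OF \<open>\<pi> s \<in> T\<close>] \<mu>[of s] short[of s] assms
    by (simp add: route_def)
qed

lemma set_route: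
  assumes "s \<in> S"
  shows "set (route s) \<subseteq> {(X, Y, Z, 2), (X', Y', Z, 2)} \<union> zone s"
proof -
  have "\<pi> s \<in> T" using \<pi>_into assms by auto
  then have "set (word_walk X s) = {X, s}" "set (word_walk (\<pi> s) X') = {\<pi> s, X'}"
    using sources[OF assms] targets[of "\<pi> s"] set_word_walk_short by auto
  moreover have "s \<in> T \<Longrightarrow> \<pi> s = s" using \<pi>_fixes assms by auto
  ultimately show ?thesis
    by (auto simp: route_def zone_def path_through_def path_around_def)
qed

lemma zones_disjoint:
  assumes "s \<in> S" "s' \<in> S" "s \<noteq> s'"
  shows "zone s \<inter> zone s' = {}"
proof -
  have \<pi>_inj: "\<pi> a = \<pi> b \<Longrightarrow> a \<in> S \<Longrightarrow> b \<in> S \<Longrightarrow> a = b" for a b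
    using inj_\<pi> by (auto simp: inj_on_def)
  have \<pi>_cross: "a = \<pi> b \<Longrightarrow> a \<in> S \<Longrightarrow> b \<in> S \<Longrightarrow> a = b" for a b
    using \<pi>_into \<pi>_fixes \<pi>_inj by (metis IntI image_subset_iff)
  show ?thesis
  proof (rule ccontr)
    assume "zone s \<inter> zone s' \<noteq> {}"
    then obtain x y z L where w: "(x, y, z, L) \<in> zone s" "(x, y, z, L) \<in> zone s'"
      by auto
    consider "L = 1" | "L = 2" "y = Y" | "L = 2" "y = Y'" | "L = 2" "y \<noteq> Y" "y \<noteq> Y'"
      using w by (auto simp: zone_def split: if_splits)
    then show False
    proof cases
      case 1
      then have "x = s \<or> x = \<pi> s" "x = s' \<or> x = \<pi> s'"
        using w by (auto simp: zone_def split: if_splits)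
      then show False using \<pi>_inj \<pi>_cross assms by metis
    next
      case 2
      then have "x = s" "x = s'"
        using w distinct_ends \<mu>[of s] \<mu>[of s'] assms by (auto simp: zone_def split: if_splits)
      then show False using assms by simp
    next
      case 3
      then have "x = \<pi> s" "x = \<pi> s'"
        using w distinct_ends \<mu>[of s] \<mu>[of s'] assms by (auto simp: zone_def split: if_splits)
      then show False using \<pi>_inj assms by metis
    next
      case 4
      then have "s \<in> S - T" "y = \<mu> s" "x \<in> set (word_walk s (\<pi> s))"
        "s' \<in> S - T" "y = \<mu> s'" "x \<in> set (word_walk s' (\<pi> s'))"
        using w assms by (auto simp: zone_def split: if_splits)
      then show False using separated assms(3) by blast
    qed
  qed
qed

lemma disjoint_paths:
  assumes "finite S" "1 \<le> k"
  shows "disjoint_paths m n k (X, Y, Z, 2) (X', Y', Z, 2) (card S + 1) (m + n + 7)"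
proof -
  let ?u = "(X, Y, Z, 2::nat)" and ?v = "(X', Y', Z, 2::nat)"
  obtain Z' where Z': "word3 k Z'" "differ1 Z Z'"
    using exists_differ1_word3[OF words(5) assms(2)] .
  then have "Z \<noteq> Z'" by (simp add: differ1_imp_neq)
  define Q where "Q = ?u # path_via_layer X Y Z X' Y' Z' @ [?v]"
  have Q: "e3c_path m n k ?u ?v Q \<and> 3 \<le> length Q \<and> length Q - 1 \<le> m + n + 7"
    using path_via_layer_from_level2[OF words Z'(1) distinct_ends(1) Z'(2)]
      hamming_le_length[of X X'] hamming_le_length[of Y Y'] words
    by (simp add: Q_def word3_def)
  have set_Q: "set Q \<subseteq> {?u, ?v} \<union> {(x, y, z, L) | x y z L. L = 0 \<or> z = Z'}"
    by (auto simp: Q_def path_via_layer_def path_B_first_def)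
  have zone_Q: "zone s \<inter> {(x, y, z, L) | x y z L. L = 0 \<or> z = Z'} = {}" for s
    using \<open>Z \<noteq> Z'\<close> by (auto simp: zone_def)
  have "disjoint_paths m n k ?u ?v (card (insert None (Some ` S))) (m + n + 7)"
  proof (rule disjoint_pathsI[where P = "case_option Q route"])
    fix i assume "i \<in> insert None (Some ` S)"
    then show "e3c_path m n k ?u ?v (case_option Q route i) \<and> 3 \<le> length (case_option Q route i) \<and>
        length (case_option Q route i) - 1 \<le> m + n + 7"
      using Q route_path by auto
  next
    fix i j assume ij: "i \<in> insert None (Some ` S)" "j \<in> insert None (Some ` S)" "i \<noteq> j"
    have "set (route s) \<inter> set Q \<subseteq> {?u, ?v}" "set Q \<inter> set (route s) \<subseteq> {?u, ?v}"
      if "s \<in> S" for s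
      using set_route[OF that] set_Q zone_Q[of s] by blast+
    moreover have "set (route s) \<inter> set (route s') \<subseteq> {?u, ?v}" if "s \<in> S" "s' \<in> S" "s \<noteq> s'" for s s'
      using set_route[OF that(1)] set_route[OF that(2)] zones_disjoint[OF that] by blast
    ultimately show "set (case_option Q route i) \<inter> set (case_option Q route j) \<subseteq> {?u, ?v}"
      using ij by (cases i; cases j) (simp_all add: image_iff)
  qed (use \<open>finite S\<close> in simp)
  then show ?thesis
    using \<open>finite S\<close> by (simp add: card_image)
qed

end

subsection \<open>Choosing the routing data\<close>

lemma bij_betw_fixing_common:
  assumes "finite S" "finite T" "card S = card T"
  obtains \<pi> where "bij_betw \<pi> S T" "\<And>x. x \<in> S \<inter> T \<Longrightarrow> \<pi> x = x"
proof -
  have "card (S - T) = card (T - S)"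
    using assms card_Diff_subset_Int[of S T] card_Diff_subset_Int[of T S] by (simp add: Int_commute)
  then obtain h where h: "bij_betw h (S - T) (T - S)"
    using assms finite_same_card_bij[of "S - T" "T - S"] by auto
  define \<pi> where "\<pi> x = (if x \<in> T then x else h x)" for x
  have "bij_betw \<pi> (S \<inter> T) (S \<inter> T)"
    by (rule bij_betw_cong[THEN iffD2, OF _ bij_betw_id]) (simp add: \<pi>_def)
  moreover have "bij_betw \<pi> (S - T) (T - S)"
    by (rule bij_betw_cong[THEN iffD2, OF _ h]) (simp add: \<pi>_def)
  ultimately have "bij_betw \<pi> ((S \<inter> T) \<union> (S - T)) ((S \<inter> T) \<union> (T - S))"
    by (rule bij_betw_combine) blast
  moreover have "(S \<inter> T) \<union> (S - T) = S" "(S \<inter> T) \<union> (T - S) = T" by blast+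
  ultimately show ?thesis
    using that by (simp add: \<pi>_def)
qed

lemma inj_on_with_exceptional_point:
  assumes "finite S" "a \<in> S" "finite P" "card S \<le> card P + 1" "finite Q" "card S \<le> card Q"
  obtains \<mu> where "inj_on \<mu> S" "\<mu> ` (S - {a}) \<subseteq> P" "\<mu> a \<in> Q"
proof -
  have "card (S - {a}) \<le> card P" using assms by simp
  then obtain \<mu>\<^sub>0 where \<mu>\<^sub>0: "inj_on \<mu>\<^sub>0 (S - {a})" "\<mu>\<^sub>0 ` (S - {a}) \<subseteq> P"
    using card_le_inj[of "S - {a}" P] assms by auto
  have "0 < card S" using assms card_gt_0_iff by blast
  then have "card (\<mu>\<^sub>0 ` (S - {a})) < card Q"
    using card_image_le[of "S - {a}" \<mu>\<^sub>0] assms by simp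
  then have "\<not> Q \<subseteq> \<mu>\<^sub>0 ` (S - {a})"
    using card_mono[of "\<mu>\<^sub>0 ` (S - {a})" Q] assms(1) by auto
  then obtain q where q: "q \<in> Q" "q \<notin> \<mu>\<^sub>0 ` (S - {a})"
    by blast
  show ?thesis
  proof
    show "inj_on (\<mu>\<^sub>0(a := q)) S"
      using \<mu>\<^sub>0(1) q(2) assms(2) by (auto simp: inj_on_def)
  qed (use \<mu>\<^sub>0(2) q(1) in auto)
qed

lemma card_words_near_ge:
  assumes w: "word3 n Y'" and n: "2 \<le> n"
  shows "2 * n + 1 \<le> card {M. word3 n M \<and> M \<noteq> Y \<and> M \<noteq> Y' \<and> hamming M Y' \<le> 2}"
    (is "_ \<le> card ?P")
proof -
  have l: "length Y' = n" and lt: "Y' ! 0 < 3" "Y' ! 1 < 3" using w n by (auto simp: word3_def)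
  define a where "a = Suc (Y' ! 0) mod 3"
  have a: "a \<noteq> Y' ! 0" "a < 3" unfolding a_def using lt Suc_mod_3_neq by auto
  define E where "E = (\<lambda>b. Y'[0 := a, 1 := b]) ` {b. b < 3 \<and> b \<noteq> Y' ! 1}"
  have "inj_on (\<lambda>b. Y'[0 := a, 1 := b]) {b. b < 3 \<and> b \<noteq> Y' ! 1}"
  proof (rule inj_onI)
    fix b c assume "Y'[0 := a, 1 := b] = Y'[0 := a, 1 := c]"
    then have "Y'[0 := a, 1 := b] ! 1 = Y'[0 := a, 1 := c] ! 1" by simp
    then show "b = c" using l n by simp
  qed
  then have card_E: "card E = 2"
    unfolding E_def using card_other_letters[OF lt(2)] by (simp add: card_image)
  have "prefix_neighbours n Y' \<inter> E = {}"
  proof (rule ccontr)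
    assume "prefix_neighbours n Y' \<inter> E \<noteq> {}"
    then obtain j c b where h: "Y'[j := c] = Y'[0 := a, 1 := b]" "c \<noteq> Y' ! j" "b \<noteq> Y' ! 1"
      unfolding prefix_neighbours_def E_def by blast
    have "Y'[j := c] ! 0 = a" "Y'[j := c] ! 1 = b"
      using l n by (simp_all add: h(1) nth_list_update)
    then show False
      using h(2,3) a(1) by (cases "j = 0") auto
  qed
  then have "card (prefix_neighbours n Y' \<union> E) = 2 * n + 2"
    using card_Un_disjoint[OF finite_prefix_neighbours, of E] card_E
      card_prefix_neighbours[OF w order_refl] unfolding E_def by simp
  then have "2 * n + 1 \<le> card ((prefix_neighbours n Y' \<union> E) - {Y})"
    using card_Diff_singleton_if[of "prefix_neighbours n Y' \<union> E" Y] finite_prefix_neighbours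
    unfolding E_def by (auto split: if_splits)
  also have "\<dots> \<le> card ?P"
  proof (rule card_mono)
    show "finite ?P" by (rule finite_subset[OF _ finite_word3[of n]]) auto
    show "(prefix_neighbours n Y' \<union> E) - {Y} \<subseteq> ?P"
    proof
      fix M assume M: "M \<in> (prefix_neighbours n Y' \<union> E) - {Y}"
      then consider "M \<in> prefix_neighbours n Y'" | "M \<in> E" by blast
      then show "M \<in> ?P"
      proof cases
        case 1
        then have "word3 n M" "differ1 M Y'"
          using prefix_neighboursD[OF _ w order_refl] by (auto intro: differ1_sym)
        then show ?thesis using M differ1_imp_neq by (auto simp: differ1_iff_hamming)
      next
        case 2
        then obtain b where b: "M = Y'[0 := a, 1 := b]" "b < 3" unfolding E_def by auto
        then have "word3 n M" using word3_list_update w a(2) by simp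
        moreover have "M ! 0 \<noteq> Y' ! 0" using b l n a by simp
        moreover have "hamming M Y' \<le> card {0::nat, 1}"
          by (rule hamming_le_card) (use b l in \<open>auto simp: nth_list_update split: if_splits\<close>)
        ultimately show ?thesis using M by auto
      qed
    qed
  qed
  finally show ?thesis .
qed

lemma card_detour_words_ge:
  assumes w: "word3 n Y" "word3 n Y'" and "Y \<noteq> Y'" and n: "2 \<le> n"
  shows "2 * n \<le> card {M. word3 n M \<and> M \<noteq> Y \<and> M \<noteq> Y' \<and> hamming Y M + hamming M Y' \<le> n + 1}"
    (is "_ \<le> card ?P")
proof -
  have fin: "finite ?P" by (rule finite_subset[OF _ finite_word3[of n]]) auto
  have l: "length Y = n" "length Y' = n" using w by (auto simp: word3_def)
  have neighbour: "M \<in> ?P" if "M \<in> prefix_neighbours n Y'" "M \<noteq> Y" for M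
  proof -
    have "word3 n M" "differ1 M Y'"
      using prefix_neighboursD[OF that(1) w(2) order_refl] by (auto intro: differ1_sym)
    moreover have "hamming Y M \<le> n" using hamming_le_length[of Y M] l by simp
    ultimately show ?thesis using that differ1_imp_neq by (auto simp: differ1_iff_hamming)
  qed
  show ?thesis
  proof (cases "Y \<in> prefix_neighbours n Y'")
    case False
    then have "prefix_neighbours n Y' \<subseteq> ?P" using neighbour by blast
    from card_mono[OF fin this] show ?thesis
      using card_prefix_neighbours[OF w(2) order_refl] by simp
  next
    case True
    text \<open>Then Y is a neighbour of Y' itself and must be replaced by a word E of the same cost.\<close>
    then obtain j c where h: "Y = Y'[j := c]" "j < n" "c \<noteq> Y' ! j"
      unfolding prefix_neighbours_def by blast
    define p where "p = (if j = 0 then 1 else 0::nat)"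
    have p: "p < n" "p \<noteq> j" using n unfolding p_def by auto
    define E where "E = Y[p := Suc (Y ! p) mod 3]"
    have Yp: "Y ! p = Y' ! p" "Y ! p < 3" using h p w l by (auto simp: word3_def)
    have E_j: "E ! j = c" using h p l by (simp add: E_def)
    have E_p: "E ! p \<noteq> Y' ! p" using p l Yp Suc_mod_3_neq by (simp add: E_def)
    have "differ1 Y E" unfolding E_def
      by (rule differ1_list_update) (use p l Yp Suc_mod_3_neq in auto)
    moreover have "hamming E Y' \<le> card {j, p}"
      by (rule hamming_le_card) (use h l p in \<open>auto simp: E_def nth_list_update split: if_splits\<close>)
    moreover have "E \<noteq> Y'" using E_j h(3) by auto
    moreover have "word3 n E" unfolding E_def by (rule word3_list_update[OF w(1)]) simp
    ultimately have "E \<in> ?P"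
      using p(2) n differ1_imp_neq[of Y E] by (simp add: differ1_iff_hamming)
    have "E \<notin> prefix_neighbours n Y'"
    proof
      assume "E \<in> prefix_neighbours n Y'"
      then obtain i b where "E = Y'[i := b]" unfolding prefix_neighbours_def by blast
      then show False using E_j E_p h(3) p(2) by (cases "i = j") auto
    qed
    then have "card (insert E (prefix_neighbours n Y' - {Y})) = 2 * n"
      using True card_prefix_neighbours[OF w(2) order_refl] finite_prefix_neighbours[of n Y'] n
      by (simp add: card_insert_if)
    moreover have "insert E (prefix_neighbours n Y' - {Y}) \<subseteq> ?P"
      using neighbour \<open>E \<in> ?P\<close> by blast
    ultimately show ?thesis using card_mono[OF fin, of "insert E (prefix_neighbours n Y' - {Y})"] by simp
  qed
qed

lemma exists_detour_words:
  assumes words: "word3 n Y" "word3 n Y'" and "Y \<noteq> Y'" "2 \<le> n"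
    and "finite S" "a \<in> S" "card S \<le> 2 * n + 1"
  obtains \<mu> where "inj_on \<mu> S" "\<And>s. s \<in> S \<Longrightarrow> word3 n (\<mu> s) \<and> \<mu> s \<noteq> Y \<and> \<mu> s \<noteq> Y'"
    "\<And>s. s \<in> S \<Longrightarrow> hamming Y (\<mu> s) + hamming (\<mu> s) Y' \<le> (if s = a then n + 2 else n + 1)"
proof -
  define P where "P = {M. word3 n M \<and> M \<noteq> Y \<and> M \<noteq> Y' \<and> hamming Y M + hamming M Y' \<le> n + 1}"
  define Q where "Q = {M. word3 n M \<and> M \<noteq> Y \<and> M \<noteq> Y' \<and> hamming M Y' \<le> 2}"
  have "finite P" "finite Q"
    unfolding P_def Q_def by (auto intro: finite_subset[OF _ finite_word3[of n]])
  moreover have "card S \<le> card P + 1" "card S \<le> card Q"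
    using assms card_detour_words_ge[OF words \<open>Y \<noteq> Y'\<close> \<open>2 \<le> n\<close>]
      card_words_near_ge[OF words(2) \<open>2 \<le> n\<close>, of Y]
    by (simp_all add: P_def Q_def)
  ultimately obtain \<mu> where \<mu>: "inj_on \<mu> S" "\<mu> ` (S - {a}) \<subseteq> P" "\<mu> a \<in> Q"
    using inj_on_with_exceptional_point[OF \<open>finite S\<close> \<open>a \<in> S\<close>] by blast
  moreover have "hamming Y (\<mu> a) \<le> n"
    using hamming_le_length[of Y] words by (simp add: word3_def)
  ultimately show thesis
    by (intro that[of \<mu>]) (auto simp: P_def Q_def)
qed

lemma level2_disjoint_paths_wide:
  assumes words: "word3 m X" "word3 m X'" "word3 n Y" "word3 n Y'" "word3 k Z"
    and "X \<noteq> X'" "Y \<noteq> Y'" "r \<le> m" "r \<le> n" "2 \<le> n" "1 \<le> k"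
  shows "disjoint_paths m n k (X, Y, Z, 2) (X', Y', Z, 2) (2 * r + 2) (m + n + 7)"
proof -
  define S where "S = insert X (prefix_neighbours r X)"
  define T where "T = insert X' (prefix_neighbours r X')"
  have fin: "finite S" "finite T"
    by (simp_all add: S_def T_def finite_prefix_neighbours)
  have card_S: "card S = 2 * r + 1" "card T = 2 * r + 1"
    using card_insert_prefix_neighbours words \<open>r \<le> m\<close> by (simp_all add: S_def T_def)
  have sources: "s \<in> S \<Longrightarrow> word3 m s \<and> (s = X \<or> differ1 X s)" for s
    using prefix_neighboursD[OF _ words(1) \<open>r \<le> m\<close>] words(1) by (auto simp: S_def)
  have targets: "t \<in> T \<Longrightarrow> word3 m t \<and> (X' = t \<or> differ1 t X')" for t
    using prefix_neighboursD[OF _ words(2) \<open>r \<le> m\<close>] words(2) by (auto simp: T_def intro: differ1_sym)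
  obtain \<pi> where \<pi>: "bij_betw \<pi> S T" "\<And>x. x \<in> S \<inter> T \<Longrightarrow> \<pi> x = x"
    using bij_betw_fixing_common[OF fin] card_S by metis
  obtain \<mu> where \<mu>: "inj_on \<mu> S" "\<And>s. s \<in> S \<Longrightarrow> word3 n (\<mu> s) \<and> \<mu> s \<noteq> Y \<and> \<mu> s \<noteq> Y'"
    "\<And>s. s \<in> S \<Longrightarrow> hamming Y (\<mu> s) + hamming (\<mu> s) Y' \<le> (if s = X then n + 2 else n + 1)"
    using exists_detour_words[OF words(3,4) \<open>Y \<noteq> Y'\<close> \<open>2 \<le> n\<close> fin(1), of X] card_S \<open>r \<le> n\<close>
    by (auto simp: S_def)
  have "level2_routing m n k X X' Y Y' Z S T \<pi> \<mu>"
  proof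
    show "hamming X s + hamming Y (\<mu> s) + hamming s (\<pi> s) + hamming (\<mu> s) Y' + hamming (\<pi> s) X'
        \<le> m + n + 3" if s: "s \<in> S - T" for s
    proof -
      have "\<pi> s \<in> T" using \<pi>(1) s by (auto simp: bij_betw_def)
      then have "hamming (\<pi> s) X' \<le> 1" "hamming s (\<pi> s) \<le> m"
        using targets[of "\<pi> s"] sources[of s] s hamming_le_one hamming_le_length[of s "\<pi> s"]
        by (auto simp: word3_def)
      moreover have "hamming X s \<le> (if s = X then 0 else 1)"
        using sources[of s] s hamming_le_one by auto
      ultimately show ?thesis using \<mu>(3)[of s] s by (auto split: if_splits)
    qed
  qed (use words sources targets \<open>X \<noteq> X'\<close> \<open>Y \<noteq> Y'\<close> \<pi> \<mu>(1,2) in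
      \<open>auto simp: bij_betw_def inj_on_def\<close>)
  from level2_routing.disjoint_paths[OF this fin(1) \<open>1 \<le> k\<close>] show ?thesis
    by (simp add: card_S)
qed

text \<open>With a single B-letter there is only one candidate for the intermediate B-word, so the
  routes around T are instead kept apart by their first A-letter, which they never change.\<close>
lemma level2_disjoint_paths_narrow:
  assumes words: "word3 m X" "word3 m X'" "word3 n Y" "word3 n Y'" "word3 k Z"
    and "X \<noteq> X'" "Y \<noteq> Y'" "n = 1" "r = 1" "r \<le> m" "1 \<le> k"
  shows "disjoint_paths m n k (X, Y, Z, 2) (X', Y', Z, 2) (2 * r + 2) (m + n + 7)"
proof -
  have l: "length X = m" "length X' = m" and "0 < m"
    using words \<open>r = 1\<close> \<open>r \<le> m\<close> by (auto simp: word3_def)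
  obtain W where W: "word3 n W" "W \<noteq> Y" "W \<noteq> Y'"
    using exists_third_letter_word words(3,4) \<open>Y \<noteq> Y'\<close> \<open>n = 1\<close> by blast
  define S where "S = (\<lambda>c. X[0 := c]) ` {..<3}"
  define T where "T = (\<lambda>c. X'[0 := c]) ` {..<3}"
  define \<pi> where "\<pi> s = X'[0 := s ! 0]" for s
  have \<pi>_S: "\<pi> (X[0 := c]) = X'[0 := c]" and \<pi>_T: "\<pi> (X'[0 := c]) = X'[0 := c]" for c
    using l \<open>0 < m\<close> by (simp_all add: \<pi>_def)
  have inj_S: "inj (\<lambda>c. X[0 := c])" and inj_T: "inj (\<lambda>c. X'[0 := c])"
    using l \<open>0 < m\<close> by (metis injI nth_list_update_eq)+
  have close: "word3 m (U[0 := c]) \<and> (U[0 := c] = U \<or> differ1 U (U[0 := c]))"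
    if "word3 m U" "c < 3" for U c
    using word3_list_update[OF that] list_update_eq_or_differ1[of 0 U c] that(1) \<open>0 < m\<close>
    by (simp add: word3_def)
  have "level2_routing m n k X X' Y Y' Z S T \<pi> (\<lambda>_. W)"
  proof
    show "t \<in> T \<Longrightarrow> word3 m t \<and> (X' = t \<or> differ1 t X')" for t
      using close[OF words(2)] differ1_sym by (auto simp: T_def) metis
    show "inj_on \<pi> S"
      using inj_T \<pi>_S by (auto simp: S_def inj_on_def inj_def)
    show "hamming X s + hamming Y W + hamming s (\<pi> s) + hamming W Y' + hamming (\<pi> s) X' \<le> m + n + 3"
      if "s \<in> S - T" for s
    proof -
      obtain c where c: "s = X[0 := c]" "c < 3" using \<open>s \<in> S - T\<close> by (auto simp: S_def)
      have "hamming X s \<le> 1" "hamming (\<pi> s) X' \<le> 1"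
        using close[OF words(1) c(2)] close[OF words(2) c(2)] hamming_le_one differ1_sym
        by (auto simp: c \<pi>_S)
      moreover have "hamming Y W \<le> 1" "hamming W Y' \<le> 1" "hamming s (\<pi> s) \<le> m"
        using hamming_le_length[of Y W] hamming_le_length[of W Y'] hamming_le_length[of s "\<pi> s"]
          words(3) W(1) l c \<open>n = 1\<close> by (simp_all add: word3_def)
      ultimately show ?thesis using \<open>n = 1\<close> by linarith
    qed
    show "W \<noteq> W \<or> set (word_walk s (\<pi> s)) \<inter> set (word_walk s' (\<pi> s')) = {}"
      if "s \<in> S - T" "s' \<in> S - T" "s \<noteq> s'" for s s'
    proof -
      have first_letter: "z ! 0 = c" if "z \<in> set (word_walk (X[0 := c]) (\<pi> (X[0 := c])))" for z c
        using nth_word_walk[OF _ that, of 0] l \<open>0 < m\<close> by (simp add: \<pi>_S)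
      obtain c c' where "s = X[0 := c]" "s' = X[0 := c']" "c \<noteq> c'"
        using \<open>s \<in> S - T\<close> \<open>s' \<in> S - T\<close> \<open>s \<noteq> s'\<close> by (auto simp: S_def)
      then show ?thesis using first_letter by blast
    qed
  qed (use words W close \<pi>_S \<pi>_T \<open>X \<noteq> X'\<close> \<open>Y \<noteq> Y'\<close> in \<open>auto simp: S_def T_def\<close>)
  moreover have "card S = 3"
    using inj_S by (simp add: S_def card_image inj_on_subset)
  ultimately show ?thesis
    using level2_routing.disjoint_paths[of m n k X X' Y Y' Z S T \<pi> "\<lambda>_. W"] \<open>1 \<le> k\<close> \<open>r = 1\<close>
    by (simp add: S_def)
qed

lemma level2_disjoint_paths:
  assumes "word3 m X" "word3 m X'" "word3 n Y" "word3 n Y'" "word3 k Z"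
    and "X \<noteq> X'" "Y \<noteq> Y'" "1 \<le> r" "r \<le> m" "r \<le> n" "1 \<le> k"
  shows "disjoint_paths m n k (X, Y, Z, 2) (X', Y', Z, 2) (2 * r + 2) (m + n + 7)"
proof (cases "2 \<le> n")
  case True
  then show ?thesis using level2_disjoint_paths_wide assms by blast
next
  case False
  then have "n = 1" "r = 1" using assms by auto
  then show ?thesis using level2_disjoint_paths_narrow assms by blast
qed

theorem lemma12:
  fixes r s t :: nat and A B C A' B' C' :: "nat list" and d d' :: nat
  assumes "1 \<le> r" and "r \<le> s" and "s \<le> t"
    and "e3c_vert r s t (A, B, C, d)" and "e3c_vert r s t (A', B', C', d')"
    and "A \<noteq> A'" and "B \<noteq> B'" and "C = C'" and "d = d'"
  shows "\<exists>ps. length ps = 2 * r + 2 \<and>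
           internally_disjoint (A, B, C, d) (A', B', C', d') ps \<and>
           (\<forall>p\<in>set ps. e3c_path r s t (A, B, C, d) (A', B', C', d') p \<and>
              (d = 0 \<longrightarrow> length p - 1 \<le> r + s + 5) \<and>
              (d \<in> {1, 2} \<longrightarrow> length p - 1 \<le> r + s + 7))"
proof -
  have words: "word3 r A" "word3 r A'" "word3 s B" "word3 s B'" "word3 t C" "d < 3"
    using assms(4,5,8) by (auto simp: e3c_vert_def)
  have "r \<le> t" "1 \<le> t" using assms(1-3) by auto
  consider "d = 0" | "d = 1" | "d = 2" using \<open>d < 3\<close> by arith
  then have "disjoint_paths r s t (A, B, C, d) (A', B', C, d) (2 * r + 2)
      (if d = 0 then r + s + 5 else r + s + 7)"
  proof cases
    case 1
    then show ?thesis using level0_disjoint_paths[OF words(1-5) assms(6,7) \<open>r \<le> t\<close>] by simp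
  next
    case 2
    have "disjoint_paths s r t (B, A, C, 2) (B', A', C, 2) (2 * r + 2) (s + r + 7)"
      by (rule level2_disjoint_paths[OF words(3,4,1,2,5) assms(7,6,1,2) order_refl \<open>1 \<le> t\<close>])
    from disjoint_paths_swap[OF this] show ?thesis
      using 2 by (simp add: e3c_swap_def add.commute)
  next
    case 3
    then show ?thesis
      using level2_disjoint_paths[OF words(1-5) assms(6,7,1) order_refl assms(2) \<open>1 \<le> t\<close>] by simp
  qed
  then show ?thesis
    using assms(8,9) by (auto simp: disjoint_paths_def)
qed

end
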